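(* Let $k \geq 3$ and $D \geq 1$ be integers. For each integer $n \geq 1$, let $R_{k,D}(n)$ denote the largest size of a subset $S \subseteq [n] := \{1,2,\dots,n\}$ that contains no subset of the form $\{i, i+d, i+2d, \dots, i+(k-1)d\}$ with $i \geq 1$ and $1 \leq d \leq D$. Then there exists a rational number $\alpha_{k,D}$ such that $$\lim_{n \to \infty} \frac{R_{k,D}(n)}{n} = \alpha_{k,D}.$$ *)

theory Defs
  imports Complex_Main
begin

definition ap_free :: "nat \<Rightarrow> nat \<Rightarrow> nat set \<Rightarrow> bool" where
  "ap_free k D S \<longleftrightarrow>
     \<not> (\<exists>i d. i \<ge> 1 \<and> 1 \<le> d \<and> d \<le> D \<and> {i + j * d | j. j < k} \<subseteq> S)"

definition R :: "nat \<Rightarrow> nat \<Rightarrow> nat \<Rightarrow> nat" where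
  "R k D n = Max {card S | S. S \<subseteq> {1..n} \<and> ap_free k D S}"

end

theory Submission
  imports Defs
begin

(*
  Every k-term progression with difference at most D spans at most L = (k - 1) * D.
  Call A \<subseteq> {..<p} admissible (cyclic_ap_free) if it contains no such progression read modulo p; repeating
  an admissible A with period p gives AP-free subsets of [n] of size (|A| / p) * n - O(1).
  Conversely, for an AP-free S \<subseteq> [n] two of the 2^L + 1 windows S \<inter> [t, t + L) with
  t \<le> 2^L + 1 agree up to translation, say at t and t + p. Then S is p-periodic on
  [t, t + p + L), so the residues of S \<inter> [t, t + p) form an admissible set, and cutting
  [t, t + p) out of S leaves an AP-free subset of [n - p]. By induction on n,
  |S| \<le> \<beta> * n + 2^L + 1, where \<beta> is the largest density |A| / p of an admissible A with
  p \<le> 2^L + 1. Hence R k D n = \<beta> * n + O(1) with \<beta> rational.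
*)

lemma ap_free_iff:
  "ap_free k D S \<longleftrightarrow> (\<forall>i d. 1 \<le> i \<longrightarrow> 1 \<le> d \<longrightarrow> d \<le> D \<longrightarrow> (\<exists>j<k. i + j * d \<notin> S))"
  unfolding ap_free_def by blast

lemma finite_card_ap_free_subsets: "finite {card S | S. S \<subseteq> {1..n} \<and> ap_free k D S}"
proof (rule finite_subset)
  show "{card S | S. S \<subseteq> {1..n} \<and> ap_free k D S} \<subseteq> card ` Pow {1..n}" by auto
qed simp

lemma card_le_R: "S \<subseteq> {1..n} \<Longrightarrow> ap_free k D S \<Longrightarrow> card S \<le> R k D n"
  unfolding R_def using finite_card_ap_free_subsets by (intro Max_ge) auto

lemma R_attained:
  assumes "1 \<le> k"
  obtains S where "S \<subseteq> {1..n}" "ap_free k D S" "R k D n = card S"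
proof -
  have "ap_free k D {}" using assms unfolding ap_free_iff by (auto intro!: exI[of _ 0])
  then have "R k D n \<in> {card S | S. S \<subseteq> {1..n} \<and> ap_free k D S}"
    unfolding R_def using finite_card_ap_free_subsets by (intro Max_in) auto
  then show ?thesis using that by blast
qed

definition cyclic_ap_free :: "nat \<Rightarrow> nat \<Rightarrow> nat \<Rightarrow> nat set \<Rightarrow> bool" where
  "cyclic_ap_free k D p A \<longleftrightarrow>
     \<not> (\<exists>i d. 1 \<le> d \<and> d \<le> D \<and> (\<forall>j<k. (i + j * d) mod p \<in> A))"

lemma bij_betw_mod_interval:
  fixes t p :: nat
  assumes "0 < p"
  shows "bij_betw (\<lambda>x. x mod p) {t..<t + p} {..<p}"
proof -
  have no_collision: False
    if "a < b" "a \<in> {t..<t + p}" "b \<in> {t..<t + p}" "a mod p = b mod p" for a b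
  proof -
    have "p dvd b - a" using that mod_eq_dvd_iff_nat[of a b p] by simp
    moreover have "0 < b - a" "b - a < p" using that by auto
    ultimately show False using nat_dvd_not_less by blast
  qed
  have inj: "inj_on (\<lambda>x. x mod p) {t..<t + p}"
  proof (rule inj_onI)
    fix x y assume "x \<in> {t..<t + p}" "y \<in> {t..<t + p}" "x mod p = y mod p"
    then show "x = y" using no_collision[of x y] no_collision[of y x]
      by (cases x y rule: linorder_cases) auto
  qed
  moreover have "(\<lambda>x. x mod p) ` {t..<t + p} \<subseteq> {..<p}" using assms by auto
  moreover have "card ((\<lambda>x. x mod p) ` {t..<t + p}) = card {..<p}"
    using card_image[OF inj] by simp
  ultimately show ?thesis by (simp add: bij_betw_def card_subset_eq)
qed

lemma ap_free_periodic_lift: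
  assumes "cyclic_ap_free k D p A"
  shows "ap_free k D {x \<in> {1..n}. (x - 1) mod p \<in> A}"
  unfolding ap_free_iff
proof (intro allI impI)
  fix i d :: nat assume "1 \<le> i" "1 \<le> d" "d \<le> D"
  then obtain j where "j < k" "((i - 1) + j * d) mod p \<notin> A"
    using assms unfolding cyclic_ap_free_def by blast
  moreover have "i + j * d - 1 = (i - 1) + j * d" using \<open>1 \<le> i\<close> by simp
  ultimately have "i + j * d \<notin> {x \<in> {1..n}. (x - 1) mod p \<in> A}" by simp
  with \<open>j < k\<close> show "\<exists>j<k. i + j * d \<notin> {x \<in> {1..n}. (x - 1) mod p \<in> A}" by blast
qed

lemma card_periodic_lift_ge:
  assumes "A \<subseteq> {..<p}"
  shows "n div p * card A \<le> card {x \<in> {1..n}. (x - 1) mod p \<in> A}"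
proof -
  define f where "f = (\<lambda>(q, r). q * p + r + 1)"
  have "inj_on f ({..<n div p} \<times> A)"
  proof (rule inj_onI, clarify)
    fix q r q' r' assume "r \<in> A" "r' \<in> A" "f (q, r) = f (q', r')"
    then have "r < p" "r' < p" "q * p + r = q' * p + r'" using assms by (auto simp: f_def)
    then have "(q * p + r) div p = (q' * p + r') div p" "(q * p + r) mod p = (q' * p + r') mod p"
      by simp_all
    then show "q = q' \<and> r = r'" using \<open>r < p\<close> \<open>r' < p\<close> by simp
  qed
  moreover have "f ` ({..<n div p} \<times> A) \<subseteq> {x \<in> {1..n}. (x - 1) mod p \<in> A}"
  proof
    fix x assume "x \<in> f ` ({..<n div p} \<times> A)"
    then obtain q r where "q < n div p" "r \<in> A" "x = f (q, r)" by auto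
    then have "r < p" using assms by auto
    have "Suc q * p \<le> n div p * p" using \<open>q < n div p\<close> by (intro mult_le_mono1) simp
    also have "\<dots> \<le> n" by (rule div_times_less_eq_dividend)
    finally show "x \<in> {x \<in> {1..n}. (x - 1) mod p \<in> A}"
      using \<open>r < p\<close> \<open>r \<in> A\<close> \<open>x = f (q, r)\<close> by (simp add: f_def)
  qed
  ultimately have "card (f ` ({..<n div p} \<times> A)) \<le> card {x \<in> {1..n}. (x - 1) mod p \<in> A}"
    by (intro card_mono) auto
  moreover have "card (f ` ({..<n div p} \<times> A)) = n div p * card A"
    using card_image[OF \<open>inj_on f _\<close>] by (simp add: card_cartesian_product)
  ultimately show ?thesis by simp
qed

lemma R_ge_cyclic_density:
  fixes p :: nat
  assumes "cyclic_ap_free k D p A" "A \<subseteq> {..<p}" "0 < p"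
  shows "card A / p * n - card A \<le> R k D n"
proof -
  have "n < n div p * p + p"
    using div_mult_mod_eq[of n p] mod_less_divisor[OF assms(3), of n] by linarith
  then have "n \<le> (n div p + 1) * p" by simp
  then have "real n \<le> (real (n div p) + 1) * p" by (metis of_nat_1 of_nat_add of_nat_mono of_nat_mult)
  then have "card A / p * n \<le> card A / p * ((real (n div p) + 1) * p)"
    by (intro mult_left_mono) simp_all
  also have "\<dots> = real (n div p * card A) + card A" using assms(3) by (simp add: field_simps)
  also have "n div p * card A \<le> R k D n"
  proof -
    let ?T = "{x \<in> {1..n}. (x - 1) mod p \<in> A}"
    have "n div p * card A \<le> card ?T" by (rule card_periodic_lift_ge[OF assms(2)])
    also have "card ?T \<le> R k D n" using ap_free_periodic_lift[OF assms(1)] by (intro card_le_R) auto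
    finally show ?thesis .
  qed
  finally show ?thesis by simp
qed

lemma repeated_window:
  fixes S :: "nat set" and L :: nat
  obtains t p where "1 \<le> t" "1 \<le> p" "t + p \<le> 2 ^ L + 1"
    "\<And>j. j < L \<Longrightarrow> t + j \<in> S \<longleftrightarrow> t + p + j \<in> S"
proof -
  define window where "window t = {j. j < L \<and> t + j \<in> S}" for t
  have "window ` {1..2 ^ L + 1} \<subseteq> Pow {..<L}" by (auto simp: window_def)
  then have "card (window ` {1..2 ^ L + 1}) \<le> card (Pow {..<L})" by (intro card_mono) auto
  then have "card (window ` {1..2 ^ L + 1}) < card {1..(2::nat) ^ L + 1}" by (simp add: card_Pow)
  then have "\<not> inj_on window {1..2 ^ L + 1}" by (rule pigeonhole)
  then obtain u v where "u \<in> {1..2 ^ L + 1}" "v \<in> {1..2 ^ L + 1}" "u < v" "window u = window v"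
    unfolding inj_on_def by (metis linorder_neqE_nat)
  moreover have "u + j \<in> S \<longleftrightarrow> u + (v - u) + j \<in> S" if "j < L" "window u = window v" "u < v" for j
    using that by (auto simp: window_def set_eq_iff)
  ultimately show ?thesis by (intro that[of u "v - u"]) auto
qed

lemma mem_iff_residue_of_repeated_window:
  fixes S :: "nat set"
  assumes window: "\<And>j. j < L \<Longrightarrow> t + j \<in> S \<longleftrightarrow> t + p + j \<in> S"
    and "0 < p" "t \<le> x" "x < t + p + L"
  shows "x \<in> S \<longleftrightarrow> x mod p \<in> (\<lambda>y. y mod p) ` {y \<in> S. t \<le> y \<and> y < t + p}"
  using assms(3,4)
proof (induction x rule: less_induct)
  case (less x)
  show ?case
  proof (cases "x < t + p")
    case True
    have "inj_on (\<lambda>y. y mod p) {t..<t + p}"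
      using bij_betw_mod_interval[OF \<open>0 < p\<close>] by (rule bij_betw_imp_inj_on)
    then show ?thesis using less.prems True by (subst inj_on_image_mem_iff) auto
  next
    case False
    then obtain j where j: "j < L" "x = t + p + j" using less.prems
      by (metis add_less_cancel_left le_add_diff_inverse not_le)
    then have "x \<in> S \<longleftrightarrow> t + j \<in> S" using window by simp
    also have "\<dots> \<longleftrightarrow> (t + j) mod p \<in> (\<lambda>y. y mod p) ` {y \<in> S. t \<le> y \<and> y < t + p}"
      using less.IH[of "t + j"] j \<open>0 < p\<close> by simp
    also have "(t + j) mod p = x mod p" using j by (metis add.commute add.left_commute mod_add_self2)
    finally show ?thesis .
  qed
qed

lemma cyclic_ap_free_of_repeated_window:
  assumes "ap_free k D S" "1 \<le> t" "0 < p"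
    and window: "\<And>j. j < (k - 1) * D \<Longrightarrow> t + j \<in> S \<longleftrightarrow> t + p + j \<in> S"
  shows "cyclic_ap_free k D p ((\<lambda>y. y mod p) ` {y \<in> S. t \<le> y \<and> y < t + p})"
  unfolding cyclic_ap_free_def
proof
  assume "\<exists>i d. 1 \<le> d \<and> d \<le> D \<and>
    (\<forall>j<k. (i + j * d) mod p \<in> (\<lambda>y. y mod p) ` {y \<in> S. t \<le> y \<and> y < t + p})"
  then obtain i d where d: "1 \<le> d" "d \<le> D"
    and ap: "\<And>j. j < k \<Longrightarrow> (i + j * d) mod p \<in> (\<lambda>y. y mod p) ` {y \<in> S. t \<le> y \<and> y < t + p}"
    by blast
  have "i mod p \<in> (\<lambda>y. y mod p) ` {t..<t + p}"
    using bij_betw_mod_interval[OF \<open>0 < p\<close>, of t] \<open>0 < p\<close> by (simp add: bij_betw_def)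
  then obtain i' where i': "t \<le> i'" "i' < t + p" "i' mod p = i mod p" by auto
  have "i' + j * d \<in> S" if "j < k" for j
  proof -
    have "j * d \<le> (k - 1) * D" using that d by (intro mult_le_mono) auto
    moreover have "(i' + j * d) mod p = (i + j * d) mod p" using i' by (metis mod_add_left_eq)
    ultimately show ?thesis
      using mem_iff_residue_of_repeated_window[where L = "(k - 1) * D", OF window \<open>0 < p\<close>]
        ap[OF that] i'
      by simp
  qed
  moreover have "1 \<le> i'" using i' \<open>1 \<le> t\<close> by simp
  ultimately show False using \<open>ap_free k D S\<close> d unfolding ap_free_iff by blast
qed

definition excise :: "nat \<Rightarrow> nat \<Rightarrow> nat set \<Rightarrow> nat set" where
  "excise t p S = {x \<in> S. x < t} \<union> (\<lambda>x. x - p) ` {x \<in> S. t + p \<le> x}"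

lemma mem_excise: "x \<in> excise t p S \<longleftrightarrow> (x < t \<and> x \<in> S) \<or> (t \<le> x \<and> x + p \<in> S)"
proof
  assume "x \<in> excise t p S"
  then show "(x < t \<and> x \<in> S) \<or> (t \<le> x \<and> x + p \<in> S)"
    unfolding excise_def by (auto simp: le_diff_conv2)
next
  assume "(x < t \<and> x \<in> S) \<or> (t \<le> x \<and> x + p \<in> S)"
  then show "x \<in> excise t p S"
    unfolding excise_def by (auto intro: rev_image_eqI[where x = "x + p"])
qed

lemma excise_subset:
  assumes "S \<subseteq> {1..n}" "1 \<le> t" "t + p \<le> n + 1"
  shows "excise t p S \<subseteq> {1..n - p}"
proof
  fix x assume "x \<in> excise t p S"
  then consider "x < t" "x \<in> S" | "t \<le> x" "x + p \<in> S" by (auto simp: mem_excise)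
  then show "x \<in> {1..n - p}"
  proof cases
    case 1
    then have "1 \<le> x" using assms(1) by auto
    then show ?thesis using 1 assms(3) by simp
  next
    case 2
    then have "x + p \<le> n" using assms(1) by auto
    then show ?thesis using 2 assms(2) by simp
  qed
qed

lemma card_excise:
  assumes "finite S"
  shows "card S = card (excise t p S) + card {x \<in> S. t \<le> x \<and> x < t + p}"
proof -
  let ?low = "{x \<in> S. x < t}" and ?mid = "{x \<in> S. t \<le> x \<and> x < t + p}"
    and ?high = "{x \<in> S. t + p \<le> x}"
  have "inj_on (\<lambda>x. x - p) ?high" by (auto intro: inj_onI)
  then have "card ((\<lambda>x. x - p) ` ?high) = card ?high" by (rule card_image)
  moreover have "?low \<inter> (\<lambda>x. x - p) ` ?high = {}" by auto
  ultimately have "card (excise t p S) = card ?low + card ?high"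
    unfolding excise_def using assms by (simp add: card_Un_disjoint)
  moreover have "card S = card (?low \<union> ?mid) + card ?high"
  proof -
    have "card (?low \<union> ?mid \<union> ?high) = card (?low \<union> ?mid) + card ?high"
      using assms by (intro card_Un_disjoint) auto
    moreover have "?low \<union> ?mid \<union> ?high = S" by auto
    ultimately show ?thesis by simp
  qed
  moreover have "card (?low \<union> ?mid) = card ?low + card ?mid"
    using assms by (intro card_Un_disjoint) auto
  ultimately show ?thesis by simp
qed

lemma ap_free_excise:
  assumes "ap_free k D S"
    and window: "\<And>j. j < (k - 1) * D \<Longrightarrow> t + j \<in> S \<longleftrightarrow> t + p + j \<in> S"
  shows "ap_free k D (excise t p S)"
  unfolding ap_free_iff
proof (intro allI impI)
  fix i d :: nat assume i: "1 \<le> i" and d: "1 \<le> d" "d \<le> D"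
  show "\<exists>j<k. i + j * d \<notin> excise t p S"
  proof (cases "t \<le> i")
    case True
    obtain j where "j < k" "(i + p) + j * d \<notin> S"
      using \<open>ap_free k D S\<close> i d unfolding ap_free_iff by (metis le_add1 order_trans)
    then show ?thesis using True by (auto simp: mem_excise ac_simps)
  next
    case False
    obtain j where j: "j < k" "i + j * d \<notin> S"
      using \<open>ap_free k D S\<close> i d unfolding ap_free_iff by blast
    have "j * d \<le> (k - 1) * D" using j d by (intro mult_le_mono) auto
    then have "i + j * d < t + (k - 1) * D" using False by simp
    then have "i + j * d + p \<notin> S" if "t \<le> i + j * d"
      using window[of "i + j * d - t"] that j(2) by (simp add: ac_simps)
    then show ?thesis using j by (auto simp: mem_excise)
  qed
qed

lemma ap_free_decompose:
  assumes "S \<subseteq> {1..n}" "ap_free k D S" "2 ^ ((k - 1) * D) + 1 \<le> n"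
  obtains p A S' where "1 \<le> p" "p \<le> 2 ^ ((k - 1) * D) + 1" "A \<subseteq> {..<p}" "cyclic_ap_free k D p A"
    "S' \<subseteq> {1..n - p}" "ap_free k D S'" "card S = card S' + card A"
proof -
  obtain t p where tp: "1 \<le> t" "1 \<le> p" "t + p \<le> 2 ^ ((k - 1) * D) + 1"
    and window: "\<And>j. j < (k - 1) * D \<Longrightarrow> t + j \<in> S \<longleftrightarrow> t + p + j \<in> S"
    using repeated_window[of "(k - 1) * D" S] by blast
  define M where "M = {x \<in> S. t \<le> x \<and> x < t + p}"
  have "inj_on (\<lambda>x. x mod p) M"
  proof (rule inj_on_subset)
    show "inj_on (\<lambda>x. x mod p) {t..<t + p}"
      using bij_betw_mod_interval[of p t] tp(2) by (simp add: bij_betw_imp_inj_on)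
  qed (auto simp: M_def)
  have "finite S" using assms(1) finite_subset by blast
  with \<open>inj_on _ M\<close> have "card S = card (excise t p S) + card ((\<lambda>x. x mod p) ` M)"
    using card_excise[of S t p] unfolding M_def by (simp add: card_image)
  moreover have "cyclic_ap_free k D p ((\<lambda>x. x mod p) ` M)"
    unfolding M_def using assms(2) tp window by (intro cyclic_ap_free_of_repeated_window) auto
  moreover have "excise t p S \<subseteq> {1..n - p}" using assms tp by (intro excise_subset) auto
  moreover have "ap_free k D (excise t p S)" using assms(2) window by (rule ap_free_excise)
  moreover have "(\<lambda>x. x mod p) ` M \<subseteq> {..<p}" using tp by auto
  ultimately show ?thesis using that tp by auto
qed

lemma card_ap_free_le:
  fixes \<beta> :: real
  assumes density: "\<And>p A. 1 \<le> p \<Longrightarrow> p \<le> 2 ^ ((k - 1) * D) + 1 \<Longrightarrow> A \<subseteq> {..<p} \<Longrightarrow>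
      cyclic_ap_free k D p A \<Longrightarrow> card A \<le> \<beta> * p"
    and "0 \<le> \<beta>" and "S \<subseteq> {1..n}" and "ap_free k D S"
  shows "card S \<le> \<beta> * n + (2 ^ ((k - 1) * D) + 1)"
  using assms(3,4)
proof (induction n arbitrary: S rule: less_induct)
  case (less n S)
  define N :: nat where "N = 2 ^ ((k - 1) * D) + 1"
  show ?case
  proof (cases "n < N")
    case True
    have "card S \<le> n" using card_mono[OF _ less.prems(1)] by simp
    with True have "real (card S) \<le> real N" by simp
    moreover have "0 \<le> \<beta> * n" using \<open>0 \<le> \<beta>\<close> by simp
    ultimately show ?thesis unfolding N_def by simp
  next
    case False
    then obtain p A S' where p: "1 \<le> p" "p \<le> N" and A: "A \<subseteq> {..<p}" "cyclic_ap_free k D p A"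
      and S': "S' \<subseteq> {1..n - p}" "ap_free k D S'" "card S = card S' + card A"
      using ap_free_decompose[OF less.prems] unfolding N_def by (metis not_less)
    have "card S' \<le> \<beta> * (n - p) + N"
      using less.IH[OF _ S'(1,2)] p False unfolding N_def by simp
    moreover have "card A \<le> \<beta> * p" using density p A unfolding N_def by blast
    ultimately show ?thesis using S'(3) p False unfolding N_def
      by (simp add: of_nat_diff algebra_simps)
  qed
qed

lemma ex_densest_cyclic_ap_free:
  assumes "1 \<le> k" "1 \<le> N"
  obtains p0 A0 where "1 \<le> p0" "p0 \<le> N" "A0 \<subseteq> {..<p0}" "cyclic_ap_free k D p0 A0"
    "\<And>p A. 1 \<le> p \<Longrightarrow> p \<le> N \<Longrightarrow> A \<subseteq> {..<p} \<Longrightarrow> cyclic_ap_free k D p A \<Longrightarrow>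
      card A / p \<le> card A0 / p0"
proof -
  define F where "F = {(p, A). 1 \<le> p \<and> p \<le> N \<and> A \<subseteq> {..<p} \<and> cyclic_ap_free k D p A}"
  define density :: "nat \<times> nat set \<Rightarrow> real" where "density = (\<lambda>(p, A). card A / p)"
  have "F \<subseteq> {..N} \<times> Pow {..<N}" unfolding F_def by auto
  then have "finite F" by (rule finite_subset) auto
  moreover have "(1, {}) \<in> F"
    using assms unfolding F_def cyclic_ap_free_def by (auto intro!: exI[of _ 0])
  ultimately have "Max (density ` F) \<in> density ` F" by (intro Max_in) auto
  then obtain p0 A0 where "(p0, A0) \<in> F" "density (p0, A0) = Max (density ` F)" by auto
  moreover have "density (p, A) \<le> Max (density ` F)" if "(p, A) \<in> F" for p A
    using \<open>finite F\<close> that by (intro Max_ge) auto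
  ultimately show ?thesis using that unfolding F_def density_def by auto
qed

lemma ratio_tendsto_of_bounded_deviation:
  fixes f :: "nat \<Rightarrow> real" and \<beta> C :: real
  assumes "\<And>n. \<bar>f n - \<beta> * n\<bar> \<le> C"
  shows "(\<lambda>n. f n / n) \<longlonglongrightarrow> \<beta>"
proof -
  have "(\<lambda>n. (f n - \<beta> * n) / n) \<longlonglongrightarrow> 0"
  proof (rule tendsto_0_le[OF lim_inverse_n])
    have "norm ((f n - \<beta> * n) / n) \<le> norm (inverse (real n)) * C" for n
    proof -
      have "norm ((f n - \<beta> * n) / n) = \<bar>f n - \<beta> * n\<bar> * inverse (real n)"
        by (simp add: divide_inverse abs_mult)
      also have "\<dots> \<le> C * inverse (real n)" using assms by (rule mult_right_mono) simp
      finally show ?thesis by (simp add: mult.commute)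
    qed
    then show "\<forall>\<^sub>F n in sequentially. norm ((f n - \<beta> * n) / n) \<le> norm (inverse (real n)) * C"
      by simp
  qed
  then have "(\<lambda>n. \<beta> + (f n - \<beta> * n) / n) \<longlonglongrightarrow> \<beta> + 0" by (intro tendsto_add) auto
  moreover have "\<forall>\<^sub>F n in sequentially. \<beta> + (f n - \<beta> * n) / n = f n / n"
    using eventually_gt_at_top[of 0] by eventually_elim (simp add: field_simps)
  ultimately show ?thesis by (simp add: tendsto_cong)
qed

theorem mainTheorem1:
  fixes k D :: nat
  assumes "k \<ge> 3" and "D \<ge> 1"
  shows "\<exists>\<alpha> :: real. \<alpha> \<in> \<rat> \<and> (\<lambda>n. real (R k D n) / real n) \<longlonglongrightarrow> \<alpha>"
proof -
  define N :: nat where "N = 2 ^ ((k - 1) * D) + 1"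
  obtain p0 A0 where p0: "1 \<le> p0" "p0 \<le> N" "A0 \<subseteq> {..<p0}" "cyclic_ap_free k D p0 A0"
    and densest: "\<And>p A. 1 \<le> p \<Longrightarrow> p \<le> N \<Longrightarrow> A \<subseteq> {..<p} \<Longrightarrow> cyclic_ap_free k D p A \<Longrightarrow>
      card A / p \<le> card A0 / p0"
    using ex_densest_cyclic_ap_free[of k N D] assms unfolding N_def by auto
  define \<beta> :: real where "\<beta> = card A0 / p0"
  have "card A0 \<le> N" using card_mono[OF _ p0(3)] p0(2) by simp
  have "\<bar>real (R k D n) - \<beta> * n\<bar> \<le> N" for n
  proof -
    obtain S where S: "S \<subseteq> {1..n}" "ap_free k D S" "R k D n = card S"
      using R_attained assms(1) by (metis le_trans one_le_numeral)
    have "real (R k D n) \<le> \<beta> * n + N"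
      using card_ap_free_le[of k D \<beta>, OF _ _ S(1,2)] densest S(3)
      unfolding N_def \<beta>_def by (simp add: pos_divide_le_eq)
    moreover have "\<beta> * n - N \<le> real (R k D n)"
      using R_ge_cyclic_density[OF p0(4,3), of n] p0(1) \<open>card A0 \<le> N\<close> unfolding \<beta>_def by simp
    ultimately show ?thesis by linarith
  qed
  then have "(\<lambda>n. real (R k D n) / real n) \<longlonglongrightarrow> \<beta>" by (rule ratio_tendsto_of_bounded_deviation)
  moreover have "\<beta> \<in> \<rat>" unfolding \<beta>_def by simp
  ultimately show ?thesis by blast
qed

end
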